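(* Let $\beta\in(0,1)$, $d\in\{1,2,3\}$, and for $k\in\mathbb N\cup\{0\}$ define $a_k^d(\beta):=\mathbb E\big(D_1^{-\beta(k-\frac d4)}\big)=\int_0^\infty w^{-\beta(k-\frac d4)}g_\beta(w)\,dw$. Then for every integer $k\ge 1$, $$0<a_k^d(\beta)\le 3\,\frac{\Gamma(1+k)}{\Gamma(1+\beta k)}.$$
   Context: $D_1$ is a positive $\beta$-stable random variable with Laplace transform $\mathbb E e^{-sD_1}=e^{-s^\beta}$, and $g_\beta$ denotes its density. *)

theory Defs
  imports "HOL-Analysis.Analysis"
begin

text \<open>g is the density (on (0,\<infinity>)) of a positive beta-stable random variable D_1,
  characterised by its Laplace transform  E exp(-s D_1) = exp(-s^beta), s \<ge> 0.\<close>
definition stable_density :: "real \<Rightarrow> (real \<Rightarrow> real) \<Rightarrow> bool" where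
  "stable_density \<beta> g \<longleftrightarrow>
     g \<in> borel_measurable lborel \<and>
     (\<forall>w>0. 0 \<le> g w) \<and>
     (\<forall>s\<ge>0. set_integrable lborel {0<..} (\<lambda>w. exp (- s * w) * g w) \<and>
             (LINT w:{0<..}|lborel. exp (- s * w) * g w) = exp (- (s powr \<beta>)))"

definition a_coeff :: "real \<Rightarrow> (real \<Rightarrow> real) \<Rightarrow> nat \<Rightarrow> nat \<Rightarrow> real" where
  "a_coeff \<beta> g d k =
     (LINT w:{0<..}|lborel. w powr (- \<beta> * (real k - real d / 4)) * g w)"

end

theory Submission
  imports Defs
begin

text \<open>
  Writing \<open>w powr (-p) * Gamma p\<close> as the integral of \<open>s powr (p - 1) * exp (- s * w)\<close> over
  \<open>s > 0\<close> and exchanging the order of integration (Tonelli) expresses the negative moment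
  \<open>E(D\<^sub>1 powr (-p))\<close> through the Laplace transform \<open>exp (- s powr \<beta>)\<close>; the resulting
  stretched Gamma integral gives \<open>Gamma (p / \<beta>) / (\<beta> * Gamma p)\<close>. For \<open>p = \<beta> * m\<close> with
  \<open>m = k - d / 4\<close> this is \<open>Gamma (1 + m) / Gamma (1 + \<beta> * m)\<close>, and by log-convexity of
  \<open>Gamma\<close> this ratio grows from \<open>m\<close> to \<open>k\<close>; so the bound even holds with \<open>1\<close> in place of \<open>3\<close>.
\<close>

lemma nn_integral_Ioi_substitution:
  fixes \<phi> \<phi>' f :: "real \<Rightarrow> real"
  assumes deriv: "\<And>t. t > 0 \<Longrightarrow> (\<phi> has_real_derivative \<phi>' t) (at t)"
    and inj: "inj_on \<phi> {0<..}" and img: "\<phi> ` {0<..} = {0<..}"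
    and f_nonneg: "\<And>s. s > 0 \<Longrightarrow> 0 \<le> f s"
    and hi: "((\<lambda>t. \<bar>\<phi>' t\<bar> * f (\<phi> t)) has_integral I) {0<..}"
  shows "(\<integral>\<^sup>+ s. ennreal (indicator {0<..} s * f s) \<partial>lborel) = ennreal I"
proof -
  have "\<phi> t > 0" if "t > 0" for t
    using img that by auto
  then have "(\<lambda>t. \<bar>\<phi>' t\<bar> * f (\<phi> t)) absolutely_integrable_on {0<..}"
    using hi f_nonneg by (intro nonnegative_absolutely_integrable_1) auto
  then have "f absolutely_integrable_on {0<..} \<and> integral {0<..} f = I"
    using has_absolute_integral_change_of_variables_1'[of "{0<..}" \<phi> \<phi>' f I]
      deriv inj img integral_unique[OF hi]
    by (auto intro: has_field_derivative_at_within)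
  then have "(f has_integral I) {0<..}"
    by (metis absolutely_integrable_on_def integrable_integral)
  then show ?thesis
    using f_nonneg by (subst nn_integral_has_integral_lebesgue) auto
qed

lemma Gamma_has_integral_Ioi:
  fixes q :: real assumes "q > 0"
  shows "((\<lambda>t. t powr (q - 1) / exp t) has_integral Gamma q) {0<..}"
proof -
  have "((\<lambda>t. t powr (q - 1) / exp t) has_integral Gamma q) {0..}"
    by (rule Gamma_integral_real) fact
  then have "((\<lambda>t. if t \<in> {0<..} then t powr (q - 1) / exp t else 0) has_integral Gamma q) {0..}"
    by (rule has_integral_spike [of "{0}", rotated 2]) auto
  then show ?thesis
    by (subst (asm) has_integral_restrict) auto
qed

lemma nn_integral_powr_exp_powr:
  fixes p \<beta> c :: real
  assumes p: "p > 0" and \<beta>: "\<beta> > 0" and c: "c > 0"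
  shows "(\<integral>\<^sup>+ s. ennreal (indicator {0<..} s * (s powr (p - 1) * exp (- c * s powr \<beta>))) \<partial>lborel)
         = ennreal (Gamma (p / \<beta>) * c powr (- p / \<beta>) / \<beta>)"
proof -
  define \<phi> where "\<phi> t = (t / c) powr (1 / \<beta>)" for t
  define \<phi>' where "\<phi>' t = 1 / \<beta> * (t / c) powr (1 / \<beta> - 1) * (1 / c)" for t
  have \<phi>_powr: "\<phi> t powr \<beta> = t / c" if "t > 0" for t
    using that \<beta> c by (simp add: \<phi>_def powr_powr)
  have deriv: "(\<phi> has_real_derivative \<phi>' t) (at t)" if "t > 0" for t
    using that c unfolding \<phi>_def \<phi>'_def by (auto intro!: derivative_eq_intros)
  have inj: "inj_on \<phi> {0<..}"
  proof (rule inj_onI)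
    fix s t :: real assume "s \<in> {0<..}" "t \<in> {0<..}" "\<phi> s = \<phi> t"
    then have "s / c = t / c" using \<phi>_powr by (metis greaterThan_iff)
    then show "s = t" using c by simp
  qed
  have img: "\<phi> ` {0<..} = {0<..}"
  proof
    show "{0<..} \<subseteq> \<phi> ` {0<..}"
    proof
      fix s :: real assume "s \<in> {0<..}"
      then show "s \<in> \<phi> ` {0<..}"
        using \<beta> c by (intro image_eqI[of _ _ "c * s powr \<beta>"]) (auto simp: \<phi>_def powr_powr)
    qed
  qed (use c in \<open>auto simp: \<phi>_def\<close>)
  have integrand: "\<bar>\<phi>' t\<bar> * (\<phi> t powr (p - 1) * exp (- c * \<phi> t powr \<beta>))
      = c powr (- p / \<beta>) / \<beta> * (t powr (p / \<beta> - 1) / exp t)" if "t > 0" for t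
  proof -
    have "\<bar>\<phi>' t\<bar> * \<phi> t powr (p - 1) = (t / c) powr ((1 / \<beta> - 1) + (p - 1) / \<beta>) / (\<beta> * c)"
      using that \<beta> c by (simp add: \<phi>_def \<phi>'_def powr_powr powr_add)
    also have "(1 / \<beta> - 1) + (p - 1) / \<beta> = p / \<beta> - 1"
      using \<beta> by (simp add: field_simps)
    also have "(t / c) powr (p / \<beta> - 1) / (\<beta> * c) = c powr (- p / \<beta>) / \<beta> * t powr (p / \<beta> - 1)"
      using that \<beta> c by (simp add: powr_divide powr_diff powr_minus_divide)
    finally have "\<bar>\<phi>' t\<bar> * \<phi> t powr (p - 1) = c powr (- p / \<beta>) / \<beta> * t powr (p / \<beta> - 1)" .
    moreover have "exp (- c * \<phi> t powr \<beta>) = 1 / exp t"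
      using that c \<phi>_powr by (simp add: exp_minus divide_inverse)
    ultimately show ?thesis
      by (simp only: mult.assoc [symmetric] times_divide_eq_right mult_1_right)
  qed
  have Gamma_integral: "((\<lambda>t. c powr (- p / \<beta>) / \<beta> * (t powr (p / \<beta> - 1) / exp t))
        has_integral Gamma (p / \<beta>) * c powr (- p / \<beta>) / \<beta>) {0<..}"
    using has_integral_mult_right[OF Gamma_has_integral_Ioi, of "p / \<beta>" "c powr (- p / \<beta>) / \<beta>"] p \<beta>
    by (simp add: mult_ac)
  have "((\<lambda>t. \<bar>\<phi>' t\<bar> * (\<phi> t powr (p - 1) * exp (- c * \<phi> t powr \<beta>)))
        has_integral Gamma (p / \<beta>) * c powr (- p / \<beta>) / \<beta>) {0<..}"
    by (rule has_integral_spike[OF negligible_empty _ Gamma_integral]) (metis DiffD1 greaterThan_iff integrand)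
  then show ?thesis
    by (intro nn_integral_Ioi_substitution[OF deriv inj img]) auto
qed

lemma nn_integral_powr_neg_via_Laplace:
  fixes g L :: "real \<Rightarrow> real" and p :: real
  assumes g [measurable]: "g \<in> borel_measurable borel"
    and g_nonneg: "\<And>w. w > 0 \<Longrightarrow> 0 \<le> g w" and p: "p > 0"
    and Laplace: "\<And>s. s > 0 \<Longrightarrow>
      (\<integral>\<^sup>+ w. ennreal (indicator {0<..} w * (exp (- s * w) * g w)) \<partial>lborel) = ennreal (L s)"
  shows "(\<integral>\<^sup>+ w. ennreal (indicator {0<..} w * (w powr (- p) * g w)) \<partial>lborel) * ennreal (Gamma p)
       = (\<integral>\<^sup>+ s. ennreal (indicator {0<..} s * (s powr (p - 1) * L s)) \<partial>lborel)"
proof -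
  define H where "H s w = ennreal (indicator {0<..} s * (s powr (p - 1) * exp (- s * w)))
    * ennreal (indicator {0<..} w * g w)" for s w :: real
  have H_measurable: "(\<lambda>(s, w). H s w) \<in> borel_measurable (lborel \<Otimes>\<^sub>M lborel)"
    unfolding H_def by measurable
  have integral_s: "(\<integral>\<^sup>+ s. H s w \<partial>lborel)
      = ennreal (indicator {0<..} w * (w powr (- p) * g w)) * ennreal (Gamma p)" for w
  proof (cases "w > 0")
    case True
    have "(\<integral>\<^sup>+ s. H s w \<partial>lborel)
        = (\<integral>\<^sup>+ s. ennreal (indicator {0<..} s * (s powr (p - 1) * exp (- w * s powr 1))) \<partial>lborel)
          * ennreal (g w)"
      using True by (subst nn_integral_multc [symmetric])
        (auto intro!: nn_integral_cong simp: H_def indicator_def mult.commute)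
    also have "\<dots> = ennreal (Gamma p * w powr (- p)) * ennreal (g w)"
      using nn_integral_powr_exp_powr[of p 1 w] p True by simp
    finally show ?thesis
      using True g_nonneg[OF True] p by (simp add: ennreal_mult'[symmetric] mult_ac)
  qed (simp add: H_def)
  have integral_w: "(\<integral>\<^sup>+ w. H s w \<partial>lborel) = ennreal (indicator {0<..} s * (s powr (p - 1) * L s))" for s
  proof (cases "s > 0")
    case True
    have "(\<integral>\<^sup>+ w. H s w \<partial>lborel)
        = ennreal (s powr (p - 1)) * (\<integral>\<^sup>+ w. ennreal (indicator {0<..} w * (exp (- s * w) * g w)) \<partial>lborel)"
      using True
      by (subst nn_integral_cmult [symmetric]) (auto intro!: nn_integral_cong
            simp: H_def ennreal_mult'[symmetric] indicator_def g_nonneg mult_ac)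
    then show ?thesis
      using True Laplace[OF True] by (simp add: ennreal_mult'[symmetric])
  qed (simp add: H_def)
  have "(\<integral>\<^sup>+ w. ennreal (indicator {0<..} w * (w powr (- p) * g w)) \<partial>lborel) * ennreal (Gamma p)
      = (\<integral>\<^sup>+ w. (\<integral>\<^sup>+ s. H s w \<partial>lborel) \<partial>lborel)"
    by (simp add: integral_s nn_integral_multc)
  also have "\<dots> = (\<integral>\<^sup>+ s. (\<integral>\<^sup>+ w. H s w \<partial>lborel) \<partial>lborel)"
    by (rule lborel_pair.Fubini'[OF H_measurable])
  finally show ?thesis
    by (simp add: integral_w)
qed

lemma stable_density_Laplace:
  assumes "stable_density \<beta> g" "s \<ge> 0"
  shows "(\<integral>\<^sup>+ w. ennreal (indicator {0<..} w * (exp (- s * w) * g w)) \<partial>lborel)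
       = ennreal (exp (- (s powr \<beta>)))"
proof -
  have "integrable lborel (\<lambda>w. indicator {0<..} w * (exp (- s * w) * g w))"
    and "(LINT w|lborel. indicator {0<..} w * (exp (- s * w) * g w)) = exp (- (s powr \<beta>))"
    using assms unfolding stable_density_def set_integrable_def set_lebesgue_integral_def by auto
  moreover have "AE w in lborel. 0 \<le> indicator {0<..} w * (exp (- s * w) * g w)"
    using assms(1) by (auto simp: stable_density_def indicator_def)
  ultimately show ?thesis
    by (simp add: nn_integral_eq_integral)
qed

lemma stable_density_negative_moment:
  assumes g: "stable_density \<beta> g" and \<beta>: "\<beta> > 0" and m: "m > 0"
  shows "(LINT w:{0<..}|lborel. w powr (- \<beta> * m) * g w) = Gamma (1 + m) / Gamma (1 + \<beta> * m)"
proof -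
  have g_measurable [measurable]: "g \<in> borel_measurable borel"
    and g_nonneg: "\<And>w. w > 0 \<Longrightarrow> 0 \<le> g w"
    using g by (auto simp: stable_density_def)
  have \<beta>m: "\<beta> * m > 0"
    using \<beta> m by simp
  let ?A = "\<integral>\<^sup>+ w. ennreal (indicator {0<..} w * (w powr (- \<beta> * m) * g w)) \<partial>lborel"
  have "?A * ennreal (Gamma (\<beta> * m))
      = (\<integral>\<^sup>+ s. ennreal (indicator {0<..} s * (s powr (\<beta> * m - 1) * exp (- 1 * s powr \<beta>))) \<partial>lborel)"
    using nn_integral_powr_neg_via_Laplace[OF g_measurable g_nonneg \<beta>m stable_density_Laplace[OF g]]
    by simp
  also have "\<dots> = ennreal (Gamma m / \<beta>)"
    using nn_integral_powr_exp_powr[OF \<beta>m \<beta>, of 1] \<beta> by simp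
  finally have moment_times_Gamma: "?A * ennreal (Gamma (\<beta> * m)) = ennreal (Gamma m / \<beta>)"
    by simp
  have Gamma_1_plus: "Gamma (1 + x) = x * Gamma x" if "x > 0" for x :: real
  proof -
    have "x \<notin> \<int>\<^sub>\<le>\<^sub>0"
      using that by (auto elim!: nonpos_Ints_cases)
    then show ?thesis
      using Gamma_plus1[of x] by (simp add: add.commute)
  qed
  have "?A = ?A * ennreal (Gamma (\<beta> * m)) / ennreal (Gamma (\<beta> * m))"
    using Gamma_real_pos[OF \<beta>m] by (simp add: ennreal_mult_divide_eq)
  also have "\<dots> = ennreal (Gamma m / \<beta>) / ennreal (Gamma (\<beta> * m))"
    by (simp only: moment_times_Gamma)
  also have "\<dots> = ennreal (Gamma m / \<beta> / Gamma (\<beta> * m))"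
    using \<beta>m \<beta> m by (intro divide_ennreal) (auto intro: Gamma_real_pos)
  also have "Gamma m / \<beta> / Gamma (\<beta> * m) = Gamma (1 + m) / Gamma (1 + \<beta> * m)"
    using m \<beta> \<beta>m by (simp add: Gamma_1_plus)
  finally have "?A = ennreal (Gamma (1 + m) / Gamma (1 + \<beta> * m))" .
  then show ?thesis
    using g_nonneg m \<beta>m by (subst (asm) nn_integral_eq_integrable)
      (auto simp: set_lebesgue_integral_def indicator_def Gamma_real_pos intro!: AE_I2)
qed

lemma ln_Gamma_real_increment_mono:
  fixes a b e :: real
  assumes "0 < a" "a \<le> b" "0 \<le> e"
  shows "ln_Gamma (a + e) - ln_Gamma a \<le> ln_Gamma (b + e) - ln_Gamma b"
proof (cases "a < b")
  case True
  define h where "h x = ln_Gamma (x + e) - ln_Gamma x" for x :: real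
  have "(h has_real_derivative Digamma (x + e) - Digamma x) (at x)" if "a \<le> x" "x \<le> b" for x
    using that assms unfolding h_def by (auto intro!: derivative_eq_intros elim!: nonpos_Ints_cases)
  from MVT2[OF True this] obtain z
    where z: "a < z" "z < b" "h b - h a = (b - a) * (Digamma (z + e) - Digamma z)"
    by blast
  have "Digamma z \<le> Digamma (z + e)"
    using z assms by (intro Digamma_real_mono) auto
  then have "0 \<le> (b - a) * (Digamma (z + e) - Digamma z)"
    using True by simp
  then show ?thesis
    using z(3) by (simp add: h_def)
qed (use assms in simp)

lemma ln_Gamma_real_mono_ge_two:
  fixes y z :: real
  assumes "1 \<le> y" "y \<le> z" "2 \<le> z"
  shows "ln_Gamma y \<le> ln_Gamma z"
proof -
  have Gamma_2: "Gamma (2 :: real) = 1"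
    using Gamma_fact[of 1, where 'a = real] by simp
  have "1 \<le> Gamma z"
    using Gamma_real_strict_mono[of 2 z] assms by (cases "z = 2") (auto simp: Gamma_2)
  show ?thesis
  proof (cases "3 / 2 \<le> y")
    case True
    then show ?thesis
      using ln_Gamma_real_strict_mono[of y z] assms by (cases "y = z") auto
  next
    case False
    text \<open>On \<open>[1, 2]\<close> the log-convex \<open>Gamma\<close> lies below its common value \<open>1\<close> at the end points.\<close>
    have "(ln \<circ> Gamma) ((1 - (y - 1)) *\<^sub>R 1 + (y - 1) *\<^sub>R 2)
        \<le> (1 - (y - 1)) * (ln \<circ> Gamma) 1 + (y - 1) * (ln \<circ> Gamma) (2 :: real)"
      using False assms by (intro convex_onD[OF log_convex_Gamma_real]) auto
    then have "ln (Gamma y) \<le> 0"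
      by (simp add: algebra_simps Gamma_2)
    then show ?thesis
      using \<open>1 \<le> Gamma z\<close> assms by (simp add: ln_Gamma_real_pos)
  qed
qed

lemma Gamma_ratio_mono:
  fixes \<beta> m m' :: real
  assumes "0 < \<beta>" "\<beta> \<le> 1" "0 \<le> m" "m \<le> m'" "1 \<le> m'"
  shows "Gamma (1 + m) / Gamma (1 + \<beta> * m) \<le> Gamma (1 + m') / Gamma (1 + \<beta> * m')"
proof -
  define \<delta> where "\<delta> = m' - m"
  have pos: "0 < 1 + \<beta> * m" "0 < 1 + \<beta> * m'"
    using assms mult_nonneg_nonneg[of \<beta> m] mult_nonneg_nonneg[of \<beta> m'] by linarith+
  have \<beta>\<delta>: "0 \<le> \<beta> * \<delta>" "\<beta> * \<delta> \<le> \<delta>"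
    using assms by (simp_all add: \<delta>_def mult_left_le_one_le)
  have "ln_Gamma (1 + \<beta> * m + \<beta> * \<delta>) - ln_Gamma (1 + \<beta> * m) \<le> ln_Gamma (1 + m + \<beta> * \<delta>) - ln_Gamma (1 + m)"
    using assms pos \<beta>\<delta> mult_left_le_one_le[of m \<beta>] by (intro ln_Gamma_real_increment_mono) auto
  moreover have "ln_Gamma (1 + m + \<beta> * \<delta>) \<le> ln_Gamma (1 + m')"
    using assms \<beta>\<delta> by (intro ln_Gamma_real_mono_ge_two) (auto simp: \<delta>_def)
  ultimately have "ln_Gamma (1 + m) - ln_Gamma (1 + \<beta> * m) \<le> ln_Gamma (1 + m') - ln_Gamma (1 + \<beta> * m')"
    by (simp add: \<delta>_def algebra_simps)
  then show ?thesis
    using assms pos by (simp add: Gamma_real_pos_exp exp_diff [symmetric])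
qed

theorem lemma2p4:
  fixes \<beta> :: real and g :: "real \<Rightarrow> real" and d k :: nat
  assumes "0 < \<beta>" "\<beta> < 1"
    and "stable_density \<beta> g"
    and "d \<in> {1, 2, 3}"
    and "1 \<le> k"
  shows "0 < a_coeff \<beta> g d k \<and>
         a_coeff \<beta> g d k \<le> 3 * Gamma (1 + real k) / Gamma (1 + \<beta> * real k)"
proof -
  define m where "m = real k - real d / 4"
  have m: "0 < m" "m \<le> real k"
    using assms(4,5) by (auto simp: m_def)
  have a: "a_coeff \<beta> g d k = Gamma (1 + m) / Gamma (1 + \<beta> * m)"
    unfolding a_coeff_def m_def[symmetric] by (rule stable_density_negative_moment[OF assms(3,1) m(1)])
  have "Gamma (1 + m) / Gamma (1 + \<beta> * m) \<le> Gamma (1 + real k) / Gamma (1 + \<beta> * real k)"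
    using assms(1,2,5) m by (intro Gamma_ratio_mono) auto
  moreover have "0 < Gamma (1 + m) / Gamma (1 + \<beta> * m)"
    using assms(1) m mult_pos_pos[of \<beta> m] by (intro divide_pos_pos Gamma_real_pos) linarith+
  ultimately show ?thesis
    unfolding a by simp
qed

end
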